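(* Let $r=r(n)$ be integers with $r\ge 2$ and $r=o(n^{1/2})$. Then $$\Pr(\mathcal A_3)=\frac{1-o(1)}{1+\frac{(r-1)^3}{n}(1+o(1))}\qquad(n\to\infty).$$ In particular, if $r/n^{1/3}\to c\in[0,\infty)$ then $\Pr(\mathcal A_3)\to 1/(1+c^3)$.
   Context: Random intersecting process: Let $[n]=\{1,\dots,n\}$ and $\binom{[n]}{r}$ the family of $r$-subsets of $[n]$. Choose $e_1$ uniformly at random from $\binom{[n]}{r}$. Given $\mathcal F_i=\{e_1,\dots,e_i\}$, let $\mathcal A(\mathcal F_i)=\{e\in\binom{[n]}{r}: e\notin\mathcal F_i,\ e\cap e_j\neq\emptyset \text{ for all } 1\le j\le i\}$, and choose $e_{i+1}$ uniformly at random from $\mathcal A(\mathcal F_i)$. The process halts when $\mathcal A(\mathcal F_i)=\emptyset$. A star is a collection of sets such that every pair of them has the same one-element intersection $\{x\}$ ($x$ is the kernel); a single set is a $1$-star by convention. For $i\ge1$, $\mathcal A_i$ is the event that at least $i$ edges are chosen and $\mathcal F_i$ is an $i$-star. *)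

theory Defs
  imports "HOL-Probability.Probability" "HOL-Library.Landau_Symbols"
begin

definition adm :: "nat \<Rightarrow> nat \<Rightarrow> nat set set \<Rightarrow> nat set set" where
  "adm n r F = {e. e \<subseteq> {1..n} \<and> card e = r \<and> e \<notin> F \<and> (\<forall>f\<in>F. e \<inter> f \<noteq> {})}"

definition is_star :: "'a set set \<Rightarrow> bool" where
  "is_star F = (\<exists>x. \<forall>e\<in>F. \<forall>f\<in>F. e \<noteq> f \<longrightarrow> e \<inter> f = {x})"

definition proc_step :: "nat \<Rightarrow> nat \<Rightarrow> nat set set \<Rightarrow> nat set option pmf" where
  "proc_step n r F = (if adm n r F = {} then return_pmf None
                      else map_pmf Some (pmf_of_set (adm n r F)))"

definition first3 :: "nat \<Rightarrow> nat \<Rightarrow> (nat set \<times> nat set \<times> nat set) option pmf" where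
  "first3 n r =
     bind_pmf (proc_step n r {}) (\<lambda>o1. (case o1 of None \<Rightarrow> return_pmf None | Some e1 \<Rightarrow>
     bind_pmf (proc_step n r {e1}) (\<lambda>o2. (case o2 of None \<Rightarrow> return_pmf None | Some e2 \<Rightarrow>
     bind_pmf (proc_step n r {e1, e2}) (\<lambda>o3. (case o3 of None \<Rightarrow> return_pmf None | Some e3 \<Rightarrow>
       return_pmf (Some (e1, e2, e3))))))))"

definition PrA3 :: "nat \<Rightarrow> nat \<Rightarrow> real" where
  "PrA3 n r = measure_pmf.prob (first3 n r)
     {Some (e1, e2, e3) | e1 e2 e3. is_star {e1, e2, e3}}"

end

theory Submission
  imports Defs
begin

text \<open>
  Condition on the first two edges \<open>e\<^sub>1, e\<^sub>2\<close>. A third edge can complete a star only if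
  \<open>e\<^sub>1 \<inter> e\<^sub>2 = {x}\<close>, and then it does so exactly when it contains \<open>x\<close> and avoids the rest
  of \<open>e\<^sub>1 \<union> e\<^sub>2\<close>: there are \<open>C(n-2r+1, r-1)\<close> such edges. Every other admissible edge
  contains a point of each petal \<open>e\<^sub>i - {x}\<close>, which gives about \<open>(r-1)\<^sup>2 C(n-2r+1, r-2)\<close>
  further edges, and the ratio of the two counts is \<open>(r-1)\<^sup>3/(n-3r+3) \<approx> (r-1)\<^sup>3/n\<close>.
  When \<open>r = o(\<surd>n)\<close> almost every second edge meets \<open>e\<^sub>1\<close> in a single vertex and the
  binomial coefficients involved differ by factors \<open>1 + O(r\<^sup>2/n)\<close>, so
  \<open>Pr(A\<^sub>3) (1 + (r-1)\<^sup>3/n)\<close> is squeezed between an explicit lower bound tending to 1 and 1.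
\<close>

section \<open>Elementary estimates\<close>

lemma card_subsets_containing_avoiding:
  assumes "finite X" "P \<subseteq> X" "Z \<subseteq> X" "P \<inter> Z = {}" "card P \<le> k"
  shows "card {e. e \<subseteq> X \<and> card e = k \<and> P \<subseteq> e \<and> e \<inter> Z = {}}
         = (card X - card P - card Z) choose (k - card P)"
proof -
  have fP: "finite P" and fZ: "finite Z" using assms finite_subset by blast+
  have eq: "{e. e \<subseteq> X \<and> card e = k \<and> P \<subseteq> e \<and> e \<inter> Z = {}}
      = (\<union>) P ` {R. R \<subseteq> X - P - Z \<and> card R = k - card P}"
  proof (intro set_eqI iffI)
    fix e assume e: "e \<in> {e. e \<subseteq> X \<and> card e = k \<and> P \<subseteq> e \<and> e \<inter> Z = {}}"
    then have "card (e - P) = k - card P" using fP by (simp add: card_Diff_subset)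
    moreover have "e = P \<union> (e - P)" "e - P \<subseteq> X - P - Z" using e by blast+
    ultimately show "e \<in> (\<union>) P ` {R. R \<subseteq> X - P - Z \<and> card R = k - card P}" by blast
  next
    fix e assume "e \<in> (\<union>) P ` {R. R \<subseteq> X - P - Z \<and> card R = k - card P}"
    then obtain R where R: "R \<subseteq> X - P - Z" "card R = k - card P" "e = P \<union> R" by blast
    moreover have "finite R" using R(1) assms(1) finite_subset by blast
    moreover have "P \<inter> R = {}" using R(1) by blast
    ultimately have "card e = card P + card R" using fP by (simp add: card_Un_disjoint)
    then show "e \<in> {e. e \<subseteq> X \<and> card e = k \<and> P \<subseteq> e \<and> e \<inter> Z = {}}"
      using R assms by auto
  qed
  have "inj_on ((\<union>) P) {R. R \<subseteq> X - P - Z \<and> card R = k - card P}"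
    by (rule inj_onI) blast
  moreover have "card (X - P - Z) = card X - card P - card Z"
  proof -
    have "card (X - P - Z) = card (X - P) - card Z"
      using assms fZ by (subst card_Diff_subset) auto
    then show ?thesis using assms fP by (simp add: card_Diff_subset)
  qed
  ultimately show ?thesis
    unfolding eq using assms by (simp add: card_image n_subsets finite_subset)
qed

lemma measure_bind_pmf_of_set:
  assumes "finite A" "A \<noteq> {}"
  shows "measure_pmf.prob (bind_pmf (pmf_of_set A) f) X
         = (\<Sum>a\<in>A. measure_pmf.prob (f a) X) / real (card A)"
proof -
  have "ennreal (measure_pmf.prob (bind_pmf (pmf_of_set A) f) X)
        = (\<Sum>a\<in>A. ennreal (measure_pmf.prob (f a) X)) / ennreal (real (card A))"
    using assms by (simp add: measure_pmf.emeasure_eq_measure[symmetric] nn_integral_pmf_of_set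
        ennreal_of_nat_eq_real_of_nat)
  also have "\<dots> = ennreal ((\<Sum>a\<in>A. measure_pmf.prob (f a) X) / real (card A))"
    using assms by (subst sum_ennreal) (auto intro!: divide_ennreal sum_nonneg simp: card_gt_0_iff)
  finally show ?thesis
    by (subst (asm) ennreal_inj) (auto intro!: divide_nonneg_nonneg sum_nonneg)
qed

lemma binomial_eq_ratio_pred:
  assumes "k < j"
  shows "real (j choose k) = (1 + real k / real (j - k)) * real ((j - 1) choose k)"
proof -
  define a b c where "a = real (j - k)" and "b = real (j choose k)" and "c = real ((j - 1) choose k)"
  have "a * b = (a + real k) * c"
    using binomial_absorb_comp[of j k] assms unfolding a_def b_def c_def
    by (metis add_diff_inverse_nat less_imp_le_nat not_le of_nat_add of_nat_mult add.commute)
  moreover have "0 < a" unfolding a_def using assms by simp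
  ultimately have "b = (1 + real k / a) * c" by (simp add: field_simps)
  then show ?thesis unfolding a_def b_def c_def .
qed

lemma binomial_add_le_exp:
  assumes "k \<le> m"
  shows "real ((m + d) choose k) \<le> real (m choose k) * exp (real k * real d / real (m + 1 - k))"
proof (induction d)
  case 0
  then show ?case by simp
next
  case (Suc d)
  have pos: "0 < real (m + 1 - k)" using assms by simp
  have "1 + real k / real (m + d + 1 - k) \<le> 1 + real k / real (m + 1 - k)"
    using pos assms by (intro add_left_mono divide_left_mono) auto
  also have "\<dots> \<le> exp (real k / real (m + 1 - k))"
    by (rule exp_ge_add_one_self)
  finally have step: "1 + real k / real (m + d + 1 - k) \<le> exp (real k / real (m + 1 - k))" .
  have "real ((m + Suc d) choose k) = (1 + real k / real (m + d + 1 - k)) * real ((m + d) choose k)"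
    using binomial_eq_ratio_pred[of k "m + d + 1"] assms by simp
  also have "\<dots> \<le> exp (real k / real (m + 1 - k)) *
      (real (m choose k) * exp (real k * real d / real (m + 1 - k)))"
    using step Suc.IH by (intro mult_mono) auto
  also have "\<dots> = real (m choose k) * exp (real k * real (Suc d) / real (m + 1 - k))"
    by (simp add: mult_exp_exp add_divide_distrib[symmetric] algebra_simps)
  finally show ?case .
qed

lemma binomial_add_le_exp_sq:
  assumes "k \<le> m" "k \<le> r" "d \<le> 2 * r" "0 < n" "n \<le> 4 * (m + 1 - k)"
  shows "real ((m + d) choose k) \<le> real (m choose k) * exp (8 * real r ^ 2 / real n)"
proof -
  have "real k * real d \<le> real r * (2 * real r)"
    using assms by (intro mult_mono) auto
  moreover have "real n / 4 \<le> real (m + 1 - k)"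
    using assms(5) by linarith
  ultimately have "real k * real d / real (m + 1 - k) \<le> (2 * real r ^ 2) / (real n / 4)"
    using assms(4) by (intro frac_le) (auto simp: power2_eq_square)
  then have exp_le: "exp (real k * real d / real (m + 1 - k)) \<le> exp (8 * real r ^ 2 / real n)"
    by simp
  have "real ((m + d) choose k) \<le> real (m choose k) * exp (real k * real d / real (m + 1 - k))"
    by (rule binomial_add_le_exp[OF assms(1)])
  also have "\<dots> \<le> real (m choose k) * exp (8 * real r ^ 2 / real n)"
    using exp_le by (intro mult_left_mono) auto
  finally show ?thesis .
qed

lemma binomial_mult_eq_pred:
  assumes "1 \<le> k"
  shows "real (m choose k) * real k = real (m choose (k - 1)) * real (m - (k - 1))"
proof -
  obtain j where k: "k = Suc j" using assms by (cases k) auto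
  have "(m choose Suc j) * Suc j = (m choose j) * (m - j)"
    using binomial_absorption[of j m] binomial_absorb_comp[of m j] by (simp add: mult.commute)
  then show ?thesis unfolding k by (metis diff_Suc_1 of_nat_mult)
qed

lemma pred_div_gap_le:
  fixes R N :: real
  assumes "2 \<le> R" "4 * R \<le> N"
  shows "(R - 1) / (N - 2 * R + 2) \<le> 2 * R / N"
proof -
  have "2 * R * (N - 2 * R + 2) - (R - 1) * N = R * (N - 4 * R) + N + 4 * R"
    by (simp add: algebra_simps)
  moreover have "0 \<le> R * (N - 4 * R)" using assms by simp
  ultimately have "(R - 1) * N \<le> 2 * R * (N - 2 * R + 2)"
    using assms by linarith
  then show ?thesis using assms by (simp add: divide_simps mult.commute)
qed

lemma le_one_plus_mul_gap:
  fixes R N :: real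
  assumes "2 \<le> R" "4 * R \<le> N"
  shows "N \<le> (1 + 12 * R / N) * (N - 3 * R + 3)"
proof -
  have "9 * R * (4 * R) \<le> 9 * R * N" using assms by (intro mult_left_mono) auto
  then have "36 * R^2 / N \<le> 9 * R"
    using assms by (simp add: divide_le_eq power2_eq_square algebra_simps)
  moreover have "0 \<le> 36 * R / N" using assms by simp
  moreover have "(1 + 12 * R / N) * (N - 3 * R + 3) = N + 9 * R + 3 - 36 * R^2 / N + 36 * R / N"
    using assms by (simp add: field_simps power2_eq_square)
  ultimately show ?thesis using assms by linarith
qed

lemma sq_div_tendsto_zero_of_smallo_sqrt:
  fixes f :: "nat \<Rightarrow> real"
  assumes "f \<in> o(\<lambda>n. sqrt (real n))"
  shows "(\<lambda>n. f n ^ 2 / real n) \<longlonglongrightarrow> 0"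
proof -
  have "(\<lambda>n. f n * f n) \<in> o(\<lambda>n. sqrt (real n) * sqrt (real n))"
    by (rule landau_o.small.mult[OF assms assms])
  then have "(\<lambda>n. f n ^ 2) \<in> o(\<lambda>n. real n)"
    by (simp add: power2_eq_square)
  then show ?thesis by (rule smalloD_tendsto)
qed

lemma div_tendsto_zero_of_sq_div:
  fixes f :: "nat \<Rightarrow> real"
  assumes "(\<lambda>n. f n ^ 2 / real n) \<longlonglongrightarrow> 0" "\<And>n. 1 \<le> f n"
  shows "(\<lambda>n. f n / real n) \<longlonglongrightarrow> 0"
proof (rule tendsto_sandwich[OF _ _ tendsto_const assms(1)])
  have "0 \<le> f n / real n" "f n / real n \<le> f n ^ 2 / real n" for n
  proof -
    have "f n * 1 \<le> f n * f n" using assms(2)[of n] by (intro mult_left_mono) auto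
    then show "0 \<le> f n / real n" "f n / real n \<le> f n ^ 2 / real n"
      using assms(2)[of n] by (auto intro: divide_right_mono simp: power2_eq_square)
  qed
  then show "\<forall>\<^sub>F n in sequentially. 0 \<le> f n / real n"
    and "\<forall>\<^sub>F n in sequentially. f n / real n \<le> f n ^ 2 / real n"
    by (auto intro: always_eventually)
qed

lemma pred_cube_div_tendsto:
  fixes f :: "nat \<Rightarrow> real"
  assumes lim: "(\<lambda>n. f n / real n powr (1/3)) \<longlonglongrightarrow> c"
    and f_sq: "(\<lambda>n. f n ^ 2 / real n) \<longlonglongrightarrow> 0" and f_ge: "\<And>n. 1 \<le> f n"
  shows "(\<lambda>n. (f n - 1)^3 / real n) \<longlonglongrightarrow> c^3"
proof -
  have "(\<lambda>n. (f n / real n powr (1/3))^3) \<longlonglongrightarrow> c^3"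
    by (intro tendsto_intros lim)
  moreover have "\<forall>\<^sub>F n in sequentially. (f n / real n powr (1/3))^3 = f n ^ 3 / real n"
    using eventually_gt_at_top[of 0]
  proof eventually_elim
    case (elim n)
    have "(real n powr (1/3))^3 = real n powr (real 3 * (1/3))"
      using elim by (subst powr_power) auto
    also have "\<dots> = real n" using elim by simp
    finally have "(real n powr (1/3))^3 = real n" .
    then show ?case by (simp add: power_divide)
  qed
  ultimately have cube: "(\<lambda>n. f n ^ 3 / real n) \<longlonglongrightarrow> c^3"
    by (rule Lim_transform_eventually)
  have "(\<lambda>n. f n ^ 3 / real n - (f n - 1)^3 / real n) \<longlonglongrightarrow> 0"
  proof (rule tendsto_sandwich[OF _ _ tendsto_const])
    show "(\<lambda>n. 3 * (f n ^ 2 / real n)) \<longlonglongrightarrow> 0"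
      using tendsto_mult_right_zero[OF f_sq, of 3] .
    have "0 \<le> f n ^ 3 - (f n - 1)^3" "f n ^ 3 - (f n - 1)^3 \<le> 3 * f n ^ 2" for n
    proof -
      have "f n ^ 3 - (f n - 1)^3 = 3 * f n ^ 2 - 3 * f n + 1"
        by (simp add: algebra_simps power3_eq_cube power2_eq_square)
      then show "0 \<le> f n ^ 3 - (f n - 1)^3" "f n ^ 3 - (f n - 1)^3 \<le> 3 * f n ^ 2"
        using f_ge[of n] by (auto simp: power2_eq_square intro: add_nonneg_nonneg mult_mono)
    qed
    then show "\<forall>\<^sub>F n in sequentially. 0 \<le> f n ^ 3 / real n - (f n - 1)^3 / real n"
      and "\<forall>\<^sub>F n in sequentially. f n ^ 3 / real n - (f n - 1)^3 / real n \<le> 3 * (f n ^ 2 / real n)"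
      by (auto intro!: always_eventually simp: diff_divide_distrib[symmetric] divide_right_mono)
  qed
  from tendsto_diff[OF cube this] show ?thesis by simp
qed

section \<open>Counting admissible edges\<close>

lemma finite_adm: "finite (adm n r F)"
  by (rule finite_subset[of _ "Pow {1..n}"]) (auto simp: adm_def)

lemma adm_empty_iff: "e \<in> adm n r {} \<longleftrightarrow> e \<subseteq> {1..n} \<and> card e = r"
  unfolding adm_def by auto

lemma adm_single_imp: "e2 \<in> adm n r {e1} \<Longrightarrow> e2 \<subseteq> {1..n} \<and> card e2 = r \<and> e2 \<noteq> e1"
  unfolding adm_def by auto

lemma edges_of_adm:
  assumes "e1 \<in> adm n r {}" "e2 \<in> adm n r {e1}"
  shows "e1 \<subseteq> {1..n}" "card e1 = r" "e2 \<subseteq> {1..n}" "card e2 = r"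
  using assms unfolding adm_def by auto

definition supersets_in :: "nat \<Rightarrow> nat \<Rightarrow> nat set \<Rightarrow> nat set set" where
  "supersets_in n r P = {e. e \<subseteq> {1..n} \<and> card e = r \<and> P \<subseteq> e}"

lemma finite_supersets_in: "finite (supersets_in n r P)"
  unfolding supersets_in_def by (rule finite_subset[of _ "Pow {1..n}"]) auto

lemma card_supersets_in:
  assumes "P \<subseteq> {1..n}" "card P \<le> r"
  shows "card (supersets_in n r P) = (n - card P) choose (r - card P)"
  using card_subsets_containing_avoiding[of "{1..n}" P "{}" r] assms
  unfolding supersets_in_def by simp

lemma is_star_pair_meet:
  assumes "is_star {e1, e2, e3}" "e1 \<noteq> e2"
  shows "\<exists>x. e1 \<inter> e2 = {x} \<and> (e3 \<noteq> e1 \<longrightarrow> e3 \<inter> e1 = {x}) \<and> (e3 \<noteq> e2 \<longrightarrow> e3 \<inter> e2 = {x})"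
  using assms unfolding is_star_def by (metis insertCI)

lemma adm_pair_no_star:
  assumes "e1 \<noteq> e2" "\<nexists>x. e1 \<inter> e2 = {x}"
  shows "{e3 \<in> adm n r {e1, e2}. is_star {e1, e2, e3}} = {}"
  using is_star_pair_meet assms by blast

locale singleton_meet =
  fixes n r :: nat and e1 e2 :: "nat set" and x :: nat
  assumes r_ge: "2 \<le> r" and n_ge: "2 * r \<le> n"
    and e1: "e1 \<subseteq> {1..n}" "card e1 = r" and e2: "e2 \<subseteq> {1..n}" "card e2 = r"
    and meet: "e1 \<inter> e2 = {x}"
begin

lemma finite_edges: "finite e1" "finite e2"
  using e1 e2 finite_subset by auto

lemma vertex_in_edges: "x \<in> e1" "x \<in> e2"
  using meet by auto

lemma card_petals: "card (e1 - {x}) = r - 1" "card (e2 - {x}) = r - 1"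
  using vertex_in_edges finite_edges e1 e2 by auto

lemma common_vertex:
  assumes "y \<in> e1" "y \<in> e2"
  shows "y = x"
proof -
  have "y \<in> e1 \<inter> e2" using assms by blast
  then show ?thesis unfolding meet by simp
qed

lemma petal_pair:
  assumes "p \<in> (e1 - {x}) \<times> (e2 - {x})"
  shows "fst p \<in> e1" "snd p \<in> e2" "fst p \<noteq> x" "snd p \<noteq> x" "fst p \<noteq> snd p"
proof -
  show "fst p \<in> e1" "snd p \<in> e2" "fst p \<noteq> x" "snd p \<noteq> x" using assms by auto
  then show "fst p \<noteq> snd p" using common_vertex by metis
qed

lemma card_union: "card (e1 \<union> e2) = 2 * r - 1"
  using card_Un_Int[OF finite_edges] meet e1 e2 by simp

lemma star_completions:
  "{e3 \<in> adm n r {e1, e2}. is_star {e1, e2, e3}}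
   = {e. e \<subseteq> {1..n} \<and> card e = r \<and> {x} \<subseteq> e \<and> e \<inter> (e1 \<union> e2 - {x}) = {}}"
proof (intro set_eqI iffI)
  fix e3 assume h: "e3 \<in> {e3 \<in> adm n r {e1, e2}. is_star {e1, e2, e3}}"
  have "e1 \<noteq> e2" using meet card_petals r_ge by auto
  then obtain y where "e1 \<inter> e2 = {y}" "e3 \<inter> e1 = {y}" "e3 \<inter> e2 = {y}"
    using is_star_pair_meet[of e1 e2 e3] h by (auto simp: adm_def)
  then show "e3 \<in> {e. e \<subseteq> {1..n} \<and> card e = r \<and> {x} \<subseteq> e \<and> e \<inter> (e1 \<union> e2 - {x}) = {}}"
    using h meet by (auto simp: adm_def)
next
  fix e3 assume h: "e3 \<in> {e. e \<subseteq> {1..n} \<and> card e = r \<and> {x} \<subseteq> e \<and> e \<inter> (e1 \<union> e2 - {x}) = {}}"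
  then have i: "e3 \<inter> e1 = {x}" "e3 \<inter> e2 = {x}" using meet by auto
  moreover have "e3 \<noteq> e1" "e3 \<noteq> e2" using i card_petals r_ge by auto
  moreover have "is_star {e1, e2, e3}"
    unfolding is_star_def using i meet by (intro exI[of _ x]) auto
  ultimately show "e3 \<in> {e3 \<in> adm n r {e1, e2}. is_star {e1, e2, e3}}"
    using h by (auto simp: adm_def)
qed

lemma card_star_completions:
  "card {e3 \<in> adm n r {e1, e2}. is_star {e1, e2, e3}} = (n - 2 * r + 1) choose (r - 1)"
proof -
  have "card (e1 \<union> e2 - {x}) = 2 * r - 2"
    using vertex_in_edges card_union finite_edges by (simp add: card_Diff_singleton)
  moreover have "{x} \<subseteq> {1..n}" "e1 \<union> e2 - {x} \<subseteq> {1..n}"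
    using vertex_in_edges e1 e2 by auto
  ultimately show ?thesis
    unfolding star_completions
    using card_subsets_containing_avoiding[of "{1..n}" "{x}" "e1 \<union> e2 - {x}" r] r_ge n_ge
    by (simp add: Suc_diff_le)
qed

definition pair_class :: "nat \<times> nat \<Rightarrow> nat set set" where
  "pair_class p = {e. e \<subseteq> {1..n} \<and> card e = r \<and> {fst p, snd p} \<subseteq> e
                      \<and> e \<inter> (e1 \<union> e2 - {fst p, snd p}) = {}}"

lemma card_pair_class:
  assumes "p \<in> (e1 - {x}) \<times> (e2 - {x})"
  shows "card (pair_class p) = (n - 2 * r + 1) choose (r - 2)"
proof -
  have sub: "{fst p, snd p} \<subseteq> e1 \<union> e2" and card_pair: "card {fst p, snd p} = 2"
    using petal_pair[OF assms] by auto
  have "card (e1 \<union> e2 - {fst p, snd p}) = card (e1 \<union> e2) - card {fst p, snd p}"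
    using sub finite_edges by (intro card_Diff_subset) auto
  also have "\<dots> = 2 * r - 3"
    unfolding card_union card_pair by simp
  finally have card_rest: "card (e1 \<union> e2 - {fst p, snd p}) = 2 * r - 3" .
  have "{fst p, snd p} \<subseteq> {1..n}" "e1 \<union> e2 - {fst p, snd p} \<subseteq> {1..n}"
    using sub e1 e2 by auto
  then have "card (pair_class p) = (card {1..n} - card {fst p, snd p}
      - card (e1 \<union> e2 - {fst p, snd p})) choose (r - card {fst p, snd p})"
    unfolding pair_class_def using card_pair r_ge by (intro card_subsets_containing_avoiding) auto
  also have "\<dots> = (n - 2 - (2 * r - 3)) choose (r - 2)"
    using card_pair card_rest by simp
  also have "n - 2 - (2 * r - 3) = n - 2 * r + 1" using r_ge n_ge by linarith
  finally show ?thesis .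
qed

lemma pair_class_avoids_vertex:
  assumes "p \<in> (e1 - {x}) \<times> (e2 - {x})" "e \<in> pair_class p"
  shows "x \<notin> e"
proof -
  have "x \<in> e1 \<union> e2 - {fst p, snd p}" using assms(1) vertex_in_edges by auto
  then show ?thesis using assms(2) unfolding pair_class_def by auto
qed

lemma pair_class_subset_adm:
  assumes "p \<in> (e1 - {x}) \<times> (e2 - {x})"
  shows "pair_class p \<subseteq> adm n r {e1, e2}"
proof
  fix e assume e: "e \<in> pair_class p"
  then have "x \<notin> e" by (rule pair_class_avoids_vertex[OF assms])
  then have "e \<noteq> e1" "e \<noteq> e2" using vertex_in_edges by auto
  moreover have "fst p \<in> e \<inter> e1" "snd p \<in> e \<inter> e2"
    using e assms unfolding pair_class_def by auto
  ultimately show "e \<in> adm n r {e1, e2}"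
    using e unfolding pair_class_def adm_def by blast
qed

lemma pair_classes_disjoint:
  assumes "p \<in> (e1 - {x}) \<times> (e2 - {x})" "q \<in> (e1 - {x}) \<times> (e2 - {x})" "p \<noteq> q"
  shows "pair_class p \<inter> pair_class q = {}"
proof -
  have "fst q \<in> e1 \<union> e2 - {fst p, snd p} \<or> snd q \<in> e1 \<union> e2 - {fst p, snd p}"
    using assms meet by (cases p, cases q) auto
  then show ?thesis unfolding pair_class_def by blast
qed

lemma finite_pair_class: "finite (pair_class p)"
  unfolding pair_class_def by (rule finite_subset[of _ "Pow {1..n}"]) auto

lemma card_UN_pair_class:
  "card (\<Union>p \<in> (e1 - {x}) \<times> (e2 - {x}). pair_class p) = (r - 1)^2 * ((n - 2 * r + 1) choose (r - 2))"
proof -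
  have "card (\<Union>p \<in> (e1 - {x}) \<times> (e2 - {x}). pair_class p)
        = (\<Sum>p \<in> (e1 - {x}) \<times> (e2 - {x}). card (pair_class p))"
    using finite_edges finite_pair_class pair_classes_disjoint by (intro card_UN_disjoint) auto
  then show ?thesis
    using card_pair_class card_petals finite_edges by (simp add: card_cartesian_product power2_eq_square)
qed

lemma card_adm_ge:
  "((n - 2 * r + 1) choose (r - 1)) + (r - 1)^2 * ((n - 2 * r + 1) choose (r - 2))
   \<le> card (adm n r {e1, e2})"
proof -
  let ?S = "{e3 \<in> adm n r {e1, e2}. is_star {e1, e2, e3}}"
  let ?M = "\<Union>p \<in> (e1 - {x}) \<times> (e2 - {x}). pair_class p"
  have "?S \<inter> ?M = {}"
    using pair_class_avoids_vertex unfolding star_completions by blast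
  moreover have "finite ?S" "finite ?M"
    using finite_adm finite_pair_class finite_edges by auto
  ultimately have "card (?S \<union> ?M) = card ?S + card ?M"
    by (intro card_Un_disjoint)
  moreover have "card (?S \<union> ?M) \<le> card (adm n r {e1, e2})"
    using pair_class_subset_adm by (intro card_mono finite_adm) blast
  ultimately show ?thesis
    using card_star_completions card_UN_pair_class by simp
qed

lemma card_adm_le:
  "card (adm n r {e1, e2}) \<le> ((n - 1) choose (r - 1)) + (r - 1)^2 * ((n - 2) choose (r - 2))"
proof -
  let ?U = "\<Union>p \<in> (e1 - {x}) \<times> (e2 - {x}). supersets_in n r {fst p, snd p}"
  have "adm n r {e1, e2} \<subseteq> supersets_in n r {x} \<union> ?U"
  proof
    fix e assume e: "e \<in> adm n r {e1, e2}"
    then have e_sub: "e \<subseteq> {1..n}" "card e = r" and "e \<inter> e1 \<noteq> {}" "e \<inter> e2 \<noteq> {}"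
      unfolding adm_def by auto
    then obtain a b where ab: "a \<in> e" "a \<in> e1" "b \<in> e" "b \<in> e2" by blast
    show "e \<in> supersets_in n r {x} \<union> ?U"
    proof (cases "x \<in> e")
      case True
      then have "e \<in> supersets_in n r {x}" using e_sub unfolding supersets_in_def by simp
      then show ?thesis by (rule UnI1)
    next
      case False
      then have p: "(a, b) \<in> (e1 - {x}) \<times> (e2 - {x})" using ab by auto
      have "e \<in> supersets_in n r {fst (a, b), snd (a, b)}"
        using ab e_sub unfolding supersets_in_def by simp
      with p show ?thesis by (intro UnI2 UN_I)
    qed
  qed
  then have "card (adm n r {e1, e2}) \<le> card (supersets_in n r {x} \<union> ?U)"
    using finite_supersets_in finite_edges by (intro card_mono) auto
  also have "\<dots> \<le> card (supersets_in n r {x}) + card ?U"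
    by (rule card_Un_le)
  also have "card ?U \<le> (\<Sum>p \<in> (e1 - {x}) \<times> (e2 - {x}). card (supersets_in n r {fst p, snd p}))"
    using finite_edges by (intro card_UN_le) auto
  also have "\<dots> = (\<Sum>p \<in> (e1 - {x}) \<times> (e2 - {x}). (n - 2) choose (r - 2))"
  proof (rule sum.cong)
    fix p assume p: "p \<in> (e1 - {x}) \<times> (e2 - {x})"
    then have "fst p \<noteq> snd p" "{fst p, snd p} \<subseteq> {1..n}" using petal_pair[OF p] e1 e2 by auto
    then have "card {fst p, snd p} = 2" "{fst p, snd p} \<subseteq> {1..n}" by simp_all
    then show "card (supersets_in n r {fst p, snd p}) = (n - 2) choose (r - 2)"
      using r_ge card_supersets_in[of "{fst p, snd p}" n r] by simp
  qed simp
  also have "\<dots> = (r - 1)^2 * ((n - 2) choose (r - 2))"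
    using card_petals finite_edges by (simp add: card_cartesian_product power2_eq_square)
  also have "card (supersets_in n r {x}) = (n - 1) choose (r - 1)"
    using vertex_in_edges e1 r_ge card_supersets_in[of "{x}" n r] by auto
  finally show ?thesis by simp
qed

end

context
  fixes n r :: nat and e1 :: "nat set"
  assumes r_ge: "2 \<le> r" and n_ge: "2 * r \<le> n" and e1: "e1 \<subseteq> {1..n}" "card e1 = r"
begin

lemma card_adm_meet_singleton:
  "card {e2 \<in> adm n r {e1}. \<exists>x. e1 \<inter> e2 = {x}} = r * ((n - r) choose (r - 1))"
proof -
  have fin: "finite e1" using e1 finite_subset by auto
  define X where "X = {1..n}"
  have fX: "finite X" and cX: "card X = n" unfolding X_def by auto
  define G where "G x = {e. e \<subseteq> X \<and> card e = r \<and> {x} \<subseteq> e \<and> e \<inter> (e1 - {x}) = {}}" for x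
  have card_G: "card (G x) = (n - r) choose (r - 1)" if x: "x \<in> e1" for x
  proof -
    have "card (G x) = (card X - card {x} - card (e1 - {x})) choose (r - card {x})"
      unfolding G_def by (rule card_subsets_containing_avoiding) (use fX x e1 r_ge X_def in auto)
    also have "\<dots> = (n - 1 - (r - 1)) choose (r - 1)" using cX x fin e1 by simp
    also have "n - 1 - (r - 1) = n - r" using r_ge n_ge by linarith
    finally show ?thesis .
  qed
  have "{e2 \<in> adm n r {e1}. \<exists>x. e1 \<inter> e2 = {x}} = (\<Union>x\<in>e1. G x)"
  proof (rule set_eqI, rule iffI)
    fix e assume h: "e \<in> {e2 \<in> adm n r {e1}. \<exists>x. e1 \<inter> e2 = {x}}"
    then obtain x where x: "e1 \<inter> e = {x}" by blast
    then have "x \<in> e1" "e \<in> G x" using h unfolding G_def adm_def X_def by auto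
    then show "e \<in> (\<Union>x\<in>e1. G x)" by blast
  next
    fix e assume "e \<in> (\<Union>x\<in>e1. G x)"
    then obtain x where x: "x \<in> e1" "e \<in> G x" by blast
    have i: "e1 \<inter> e = {x}" using x unfolding G_def by auto
    have "card (e1 - {x}) = r - 1" using x fin e1 by simp
    then have "e1 - {x} \<noteq> {}" using r_ge by (intro notI) simp
    then have "e \<noteq> e1" using x unfolding G_def by auto
    then show "e \<in> {e2 \<in> adm n r {e1}. \<exists>x. e1 \<inter> e2 = {x}}"
      using x i unfolding G_def adm_def X_def by auto
  qed
  moreover have "card (\<Union>x\<in>e1. G x) = (\<Sum>x\<in>e1. card (G x))"
  proof (rule card_UN_disjoint[OF fin])
    show "\<forall>x\<in>e1. finite (G x)" unfolding G_def using fX by (auto intro: finite_subset)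
    show "\<forall>x\<in>e1. \<forall>y\<in>e1. x \<noteq> y \<longrightarrow> G x \<inter> G y = {}" unfolding G_def by blast
  qed
  ultimately show ?thesis using card_G e1 by simp
qed

lemma card_adm_meet_not_singleton_le:
  "card {e2 \<in> adm n r {e1}. \<nexists>x. e1 \<inter> e2 = {x}} \<le> (r choose 2) * ((n - 2) choose (r - 2))"
proof -
  have fin: "finite e1" using e1 finite_subset by auto
  define pairs where "pairs = {P. P \<subseteq> e1 \<and> card P = 2}"
  have card_pairs: "card pairs = r choose 2" and fin_pairs: "finite pairs"
    unfolding pairs_def using n_subsets[OF fin] e1 fin by auto
  have "{e2 \<in> adm n r {e1}. \<nexists>x. e1 \<inter> e2 = {x}} \<subseteq> (\<Union>P\<in>pairs. supersets_in n r P)"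
  proof
    fix e assume h: "e \<in> {e2 \<in> adm n r {e1}. \<nexists>x. e1 \<inter> e2 = {x}}"
    then obtain u where u: "u \<in> e1" "u \<in> e" unfolding adm_def by auto
    moreover have "e1 \<inter> e \<noteq> {u}" using h by blast
    ultimately obtain v where v: "v \<in> e1" "v \<in> e" "v \<noteq> u" by blast
    then have "{u, v} \<in> pairs" "e \<in> supersets_in n r {u, v}"
      using h u unfolding pairs_def supersets_in_def adm_def by auto
    then show "e \<in> (\<Union>P\<in>pairs. supersets_in n r P)" by blast
  qed
  then have "card {e2 \<in> adm n r {e1}. \<nexists>x. e1 \<inter> e2 = {x}} \<le> card (\<Union>P\<in>pairs. supersets_in n r P)"
    using fin_pairs finite_supersets_in by (intro card_mono) auto
  also have "\<dots> \<le> (\<Sum>P\<in>pairs. card (supersets_in n r P))"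
    by (rule card_UN_le[OF fin_pairs])
  also have "\<dots> = (\<Sum>P\<in>pairs. (n - 2) choose (r - 2))"
  proof (rule sum.cong)
    fix P assume "P \<in> pairs"
    then have "P \<subseteq> {1..n}" "card P = 2" using e1 unfolding pairs_def by auto
    then show "card (supersets_in n r P) = (n - 2) choose (r - 2)"
      using card_supersets_in[of P n r] r_ge by simp
  qed simp
  finally show ?thesis using card_pairs by simp
qed

end

section \<open>\<open>Pr(A\<^sub>3)\<close> as an iterated average\<close>

text \<open>If the process halts (\<open>adm n r F = {}\<close>), both sides are \<open>0\<close>, the right one since \<open>x / 0 = 0\<close>.\<close>
lemma measure_proc_step_bind:
  assumes "None \<notin> X"
  shows "measure_pmf.prob (bind_pmf (proc_step n r F)
           (\<lambda>w. case w of None \<Rightarrow> return_pmf None | Some e \<Rightarrow> g e)) X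
         = (\<Sum>e\<in>adm n r F. measure_pmf.prob (g e) X) / real (card (adm n r F))"
  using assms
  by (cases "adm n r F = {}")
     (simp_all add: proc_step_def bind_return_pmf bind_map_pmf measure_bind_pmf_of_set finite_adm)

definition cond_star_prob2 :: "nat \<Rightarrow> nat \<Rightarrow> nat set \<Rightarrow> nat set \<Rightarrow> real" where
  "cond_star_prob2 n r e1 e2 =
     real (card {e3 \<in> adm n r {e1, e2}. is_star {e1, e2, e3}}) / real (card (adm n r {e1, e2}))"

definition cond_star_prob1 :: "nat \<Rightarrow> nat \<Rightarrow> nat set \<Rightarrow> real" where
  "cond_star_prob1 n r e1 =
     (\<Sum>e2\<in>adm n r {e1}. cond_star_prob2 n r e1 e2) / real (card (adm n r {e1}))"

lemma PrA3_eq_average: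
  "PrA3 n r = (\<Sum>e1\<in>adm n r {}. cond_star_prob1 n r e1) / real (card (adm n r {}))"
proof -
  define E :: "(nat set \<times> nat set \<times> nat set) option set" where
    "E = {Some (e1, e2, e3) | e1 e2 e3. is_star {e1, e2, e3}}"
  have NE: "None \<notin> E" unfolding E_def by auto
  have third: "measure_pmf.prob (bind_pmf (proc_step n r {e1, e2})
      (\<lambda>w. case w of None \<Rightarrow> return_pmf None | Some e3 \<Rightarrow> return_pmf (Some (e1, e2, e3)))) E
    = cond_star_prob2 n r e1 e2" for e1 e2
  proof -
    have "(\<Sum>e3\<in>adm n r {e1, e2}. measure_pmf.prob (return_pmf (Some (e1, e2, e3))) E)
         = (\<Sum>e3\<in>adm n r {e1, e2}. if is_star {e1, e2, e3} then 1 else 0)"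
      by (rule sum.cong) (auto simp: E_def indicator_def)
    also have "\<dots> = real (card {e3 \<in> adm n r {e1, e2}. is_star {e1, e2, e3}})"
      by (simp add: sum.If_cases finite_adm Int_def)
    finally show ?thesis by (simp add: measure_proc_step_bind[OF NE] cond_star_prob2_def)
  qed
  have second: "measure_pmf.prob (bind_pmf (proc_step n r {e1}) (\<lambda>w. case w of None \<Rightarrow> return_pmf None
      | Some e2 \<Rightarrow> bind_pmf (proc_step n r {e1, e2})
          (\<lambda>w. case w of None \<Rightarrow> return_pmf None | Some e3 \<Rightarrow> return_pmf (Some (e1, e2, e3))))) E
    = cond_star_prob1 n r e1" for e1
    by (simp only: measure_proc_step_bind[OF NE, of n r "{e1}"] third cond_star_prob1_def)
  show ?thesis unfolding PrA3_def first3_def E_def[symmetric]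
    by (simp only: measure_proc_step_bind[OF NE, of n r "{}"] second)
qed

section \<open>Bounds for \<open>Pr(A\<^sub>3)\<close>\<close>

context
  fixes n r :: nat
  assumes r_ge: "2 \<le> r" and n_ge: "4 * r \<le> n"
begin

lemma star_count_pos: "0 < (n - 2 * r + 1) choose (r - 1)"
  using r_ge n_ge by (simp add: zero_less_binomial_iff)

lemma cond_star_prob2_le:
  assumes "e1 \<in> adm n r {}" "e2 \<in> adm n r {e1}"
  defines "S \<equiv> real ((n - 2 * r + 1) choose (r - 1))"
    and "M \<equiv> real ((r - 1)^2 * ((n - 2 * r + 1) choose (r - 2)))"
  shows "cond_star_prob2 n r e1 e2 \<le> S / (S + M)"
proof (cases "\<exists>x. e1 \<inter> e2 = {x}")
  case True
  then obtain x where meet: "e1 \<inter> e2 = {x}" by blast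
  interpret singleton_meet n r e1 e2 x
    by (rule singleton_meet.intro[OF r_ge _ edges_of_adm[OF assms(1,2)] meet]) (use n_ge in simp)
  have le: "S + M \<le> real (card (adm n r {e1, e2}))"
    using card_adm_ge unfolding S_def M_def by (simp only: of_nat_add[symmetric] of_nat_le_iff)
  have "0 < S + M" using star_count_pos unfolding S_def M_def by (intro add_pos_nonneg) simp_all
  with le show ?thesis
    unfolding cond_star_prob2_def card_star_completions S_def[symmetric]
    by (intro divide_left_mono mult_pos_pos) (auto simp: S_def)
next
  case False
  have "e1 \<noteq> e2" using adm_single_imp[OF assms(2)] by blast
  then have no_star: "{e3 \<in> adm n r {e1, e2}. is_star {e1, e2, e3}} = {}"
    using False by (rule adm_pair_no_star)
  have "cond_star_prob2 n r e1 e2 = 0"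
    unfolding cond_star_prob2_def no_star by simp
  then show ?thesis unfolding S_def M_def by simp
qed

lemma cond_star_prob2_ge:
  assumes "e1 \<in> adm n r {}" "e2 \<in> adm n r {e1}" "e1 \<inter> e2 = {x}"
  defines "S \<equiv> real ((n - 2 * r + 1) choose (r - 1))"
    and "T \<equiv> real (((n - 1) choose (r - 1)) + (r - 1)^2 * ((n - 2) choose (r - 2)))"
  shows "S / T \<le> cond_star_prob2 n r e1 e2"
proof -
  interpret singleton_meet n r e1 e2 x
    by (rule singleton_meet.intro[OF r_ge _ edges_of_adm[OF assms(1,2)] assms(3)]) (use n_ge in simp)
  have le_T: "real (card (adm n r {e1, e2})) \<le> T"
    using card_adm_le unfolding T_def by (simp only: of_nat_le_iff)
  have ge_S: "S \<le> real (card (adm n r {e1, e2}))"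
    using card_adm_ge unfolding S_def by linarith
  have "0 < S" using star_count_pos unfolding S_def by simp
  with le_T ge_S show ?thesis
    unfolding cond_star_prob2_def card_star_completions S_def[symmetric]
    by (intro divide_left_mono mult_pos_pos) auto
qed

lemma cond_star_prob1_ge:
  assumes "e1 \<in> adm n r {}"
  defines "S \<equiv> real ((n - 2 * r + 1) choose (r - 1))"
    and "T \<equiv> real (((n - 1) choose (r - 1)) + (r - 1)^2 * ((n - 2) choose (r - 2)))"
    and "K \<equiv> real (r * ((n - r) choose (r - 1)))"
    and "B \<equiv> real ((r choose 2) * ((n - 2) choose (r - 2)))"
  shows "S / T * (K / (K + B)) \<le> cond_star_prob1 n r e1"
proof -
  have e1: "e1 \<subseteq> {1..n}" "card e1 = r" using assms(1) adm_empty_iff by auto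
  define G where "G = {e2 \<in> adm n r {e1}. \<exists>x. e1 \<inter> e2 = {x}}"
  define H where "H = {e2 \<in> adm n r {e1}. \<nexists>x. e1 \<inter> e2 = {x}}"
  have card_G: "real (card G) = K"
    unfolding K_def G_def using card_adm_meet_singleton r_ge n_ge e1 by simp
  have card_H: "real (card H) \<le> B"
    unfolding B_def H_def using card_adm_meet_not_singleton_le[of r n e1] r_ge n_ge e1
    by (simp only: of_nat_le_iff)
  have "adm n r {e1} = G \<union> H" "G \<inter> H = {}" "finite G" "finite H"
    unfolding G_def H_def using finite_adm by auto
  then have card_adm: "real (card (adm n r {e1})) = K + real (card H)"
    using card_G by (simp add: card_Un_disjoint)
  have K_pos: "0 < K" unfolding K_def using r_ge n_ge by (simp add: zero_less_binomial_iff)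
  have "S / T \<le> cond_star_prob2 n r e1 e2" if e2: "e2 \<in> G" for e2
  proof -
    obtain x where "e2 \<in> adm n r {e1}" "e1 \<inter> e2 = {x}" using e2 unfolding G_def by blast
    then show ?thesis unfolding S_def T_def by (rule cond_star_prob2_ge[OF assms(1)])
  qed
  then have "K * (S / T) \<le> (\<Sum>e2\<in>G. cond_star_prob2 n r e1 e2)"
    using sum_bounded_below[of G "S / T" "cond_star_prob2 n r e1"] unfolding card_G by simp
  also have "\<dots> \<le> (\<Sum>e2\<in>adm n r {e1}. cond_star_prob2 n r e1 e2)"
    by (rule sum_mono2[OF finite_adm]) (auto simp: G_def cond_star_prob2_def)
  finally have sum_ge: "K * (S / T) \<le> (\<Sum>e2\<in>adm n r {e1}. cond_star_prob2 n r e1 e2)" .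
  have "S / T * (K / (K + B)) \<le> S / T * (K / real (card (adm n r {e1})))"
    using card_adm card_H K_pos unfolding S_def T_def
    by (intro mult_left_mono divide_left_mono) auto
  also have "\<dots> = K * (S / T) / real (card (adm n r {e1}))"
    by simp
  also have "\<dots> \<le> cond_star_prob1 n r e1"
    unfolding cond_star_prob1_def using sum_ge by (rule divide_right_mono) simp
  finally show ?thesis .
qed

lemma PrA3_le:
  defines "S \<equiv> real ((n - 2 * r + 1) choose (r - 1))"
    and "M \<equiv> real ((r - 1)^2 * ((n - 2 * r + 1) choose (r - 2)))"
  shows "PrA3 n r \<le> S / (S + M)"
proof -
  have nonneg: "0 \<le> S / (S + M)" unfolding S_def M_def by simp
  have "cond_star_prob1 n r e1 \<le> S / (S + M)" if "e1 \<in> adm n r {}" for e1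
    using sum_bounded_above[of "adm n r {e1}" "cond_star_prob2 n r e1" "S / (S + M)"]
      cond_star_prob2_le[OF that] nonneg unfolding cond_star_prob1_def S_def M_def
    by (cases "adm n r {e1} = {}") (auto simp: divide_le_eq mult.commute finite_adm)
  then show ?thesis
    using sum_bounded_above[of "adm n r {}" "cond_star_prob1 n r" "S / (S + M)"] nonneg
    unfolding PrA3_eq_average
    by (cases "adm n r {} = {}") (auto simp: divide_le_eq mult.commute finite_adm)
qed

lemma PrA3_ge:
  defines "S \<equiv> real ((n - 2 * r + 1) choose (r - 1))"
    and "T \<equiv> real (((n - 1) choose (r - 1)) + (r - 1)^2 * ((n - 2) choose (r - 2)))"
    and "K \<equiv> real (r * ((n - r) choose (r - 1)))"
    and "B \<equiv> real ((r choose 2) * ((n - 2) choose (r - 2)))"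
  shows "S / T * (K / (K + B)) \<le> PrA3 n r"
proof -
  have "{1..r} \<in> adm n r {}" using adm_empty_iff n_ge by auto
  then have "0 < card (adm n r {})" using finite_adm card_gt_0_iff by blast
  then show ?thesis
    using sum_bounded_below[of "adm n r {}" "S / T * (K / (K + B))" "cond_star_prob1 n r"]
      cond_star_prob1_ge unfolding PrA3_eq_average S_def T_def K_def B_def
    by (simp add: le_divide_eq mult.commute)
qed

end

text \<open>The factor \<open>exp (8r\<^sup>2/n)\<close> bounds ratios of neighbouring binomial coefficients,
  \<open>1 + 12r/n\<close> compares \<open>(r-1)\<^sup>3/(n-3r+3)\<close> with \<open>(r-1)\<^sup>3/n\<close>, and the last factor accounts for
  the second edges that do not meet \<open>e\<^sub>1\<close> in a single vertex.\<close>
definition star_lower_bound :: "real \<Rightarrow> real \<Rightarrow> real" where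
  "star_lower_bound N R =
     1 / (exp (8 * R^2 / N) * (1 + 12 * R / N) * (1 + exp (8 * R^2 / N) * (2 * R^2 / N)))"

context
  fixes n r :: nat
  assumes r_ge: "2 \<le> r" and n_ge: "4 * r \<le> n"
begin

lemma of_nat_linear_diffs:
  "real (r - 1) = real r - 1" "real (r - 2) = real r - 2"
  "real (n - 3 * r + 3) = real n - 3 * real r + 3"
  "real (n - 2 * r + 2) = real n - 2 * real r + 2"
  using r_ge n_ge by (simp_all add: of_nat_diff)

lemma star_count_absorb:
  "real ((n - 2 * r + 1) choose (r - 2)) * (real n - 3 * real r + 3)
   = real ((n - 2 * r + 1) choose (r - 1)) * (real r - 1)"
proof -
  have "r - 1 - 1 = r - 2" "n - 2 * r + 1 - (r - 1 - 1) = n - 3 * r + 3"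
    using r_ge n_ge by auto
  then show ?thesis
    using binomial_mult_eq_pred[of "r - 1" "n - 2 * r + 1"] r_ge of_nat_linear_diffs
    by (simp add: mult.commute)
qed

lemma meet_count_absorb:
  "real ((n - r) choose (r - 2)) * (real n - 2 * real r + 2)
   = real ((n - r) choose (r - 1)) * (real r - 1)"
proof -
  have "r - 1 - 1 = r - 2" "n - r - (r - 1 - 1) = n - 2 * r + 2"
    using r_ge n_ge by auto
  then show ?thesis
    using binomial_mult_eq_pred[of "r - 1" "n - r"] r_ge of_nat_linear_diffs
    by (simp add: mult.commute)
qed

lemma PrA3_mul_le_one: "PrA3 n r * (1 + (real r - 1)^3 / real n) \<le> 1"
proof -
  define S C D a where "S = real ((n - 2 * r + 1) choose (r - 1))"
    and "C = real ((n - 2 * r + 1) choose (r - 2))"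
    and "D = real n - 3 * real r + 3" and "a = (real r - 1)^3 / real n"
  have S_pos: "0 < S" and a_nonneg: "0 \<le> a" and C_nonneg: "0 \<le> C"
    unfolding S_def a_def C_def using star_count_pos r_ge n_ge by auto
  have D_pos: "0 < D" and D_le: "D \<le> real n" unfolding D_def using n_ge r_ge by linarith+
  have C_eq: "C = S * (real r - 1) / D"
    using star_count_absorb D_pos unfolding S_def C_def D_def by (simp add: eq_divide_eq)
  have "S * a \<le> S * ((real r - 1)^3 / D)"
    unfolding a_def using S_pos D_pos D_le r_ge by (intro mult_left_mono divide_left_mono) auto
  also have "\<dots> = (real r - 1)^2 * C"
    unfolding C_eq by (simp add: power3_eq_cube power2_eq_square)
  finally have M_ge: "S * a \<le> (real r - 1)^2 * C" .
  have "PrA3 n r \<le> S / (S + (real r - 1)^2 * C)"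
    using PrA3_le[OF r_ge n_ge] r_ge unfolding S_def C_def by (simp add: of_nat_diff)
  also have "\<dots> \<le> S / (S + S * a)"
    using M_ge S_pos a_nonneg C_nonneg by (intro divide_left_mono mult_pos_pos add_pos_nonneg) auto
  also have "\<dots> = S / (S * (1 + a))"
    by (simp add: distrib_left)
  also have "\<dots> = 1 / (1 + a)"
    using S_pos by simp
  finally show ?thesis
    using a_nonneg unfolding a_def[symmetric] by (simp add: divide_simps)
qed

lemma adm_pair_bound_le:
  "real (((n - 1) choose (r - 1)) + (r - 1)^2 * ((n - 2) choose (r - 2)))
   \<le> real ((n - 2 * r + 1) choose (r - 1)) *
     (exp (8 * real r^2 / real n) * (1 + 12 * real r / real n) * (1 + (real r - 1)^3 / real n))"
proof -
  define R N where "R = real r" and "N = real n"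
  define S C D e g a where "S = real ((n - 2 * r + 1) choose (r - 1))"
    and "C = real ((n - 2 * r + 1) choose (r - 2))" and "D = N - 3 * R + 3"
    and "e = exp (8 * R^2 / N)" and "g = 12 * R / N" and "a = (R - 1)^3 / N"
  have R2: "2 \<le> R" and NR: "4 * R \<le> N" unfolding R_def N_def using r_ge n_ge by auto
  have D_pos: "0 < D" unfolding D_def using NR R2 by linarith
  have e_pos: "0 < e" and S_nonneg: "0 \<le> S" and a_nonneg: "0 \<le> a" and g_nonneg: "0 \<le> g"
    unfolding e_def S_def a_def g_def using R2 NR by auto
  have "real ((n - 2 * r + 1 + (2 * r - 2)) choose (r - 1)) \<le> S * e"
    unfolding S_def e_def R_def N_def using r_ge n_ge by (intro binomial_add_le_exp_sq) auto
  moreover have "n - 2 * r + 1 + (2 * r - 2) = n - 1" using r_ge n_ge by simp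
  ultimately have T1: "real ((n - 1) choose (r - 1)) \<le> S * e" by metis
  have "real ((n - 2 * r + 1 + (2 * r - 3)) choose (r - 2)) \<le> C * e"
    unfolding C_def e_def R_def N_def using r_ge n_ge by (intro binomial_add_le_exp_sq) auto
  moreover have "n - 2 * r + 1 + (2 * r - 3) = n - 2" using r_ge n_ge by simp
  ultimately have T2: "real ((n - 2) choose (r - 2)) \<le> C * e" by metis
  have C_eq: "C = S * (R - 1) / D"
    using star_count_absorb D_pos unfolding S_def C_def D_def R_def N_def by (simp add: eq_divide_eq)
  have "N \<le> (1 + g) * D"
    using le_one_plus_mul_gap[OF R2 NR] unfolding g_def D_def .
  then have "(R - 1)^3 * N \<le> (R - 1)^3 * ((1 + g) * D)"
    using R2 by (intro mult_left_mono) auto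
  then have gam: "(R - 1)^3 / D \<le> a * (1 + g)"
    unfolding a_def using D_pos R2 NR by (simp add: field_simps)
  have "(R - 1)^2 * real ((n - 2) choose (r - 2)) \<le> (R - 1)^2 * (C * e)"
    using T2 by (rule mult_left_mono) simp
  moreover have "real (((n - 1) choose (r - 1)) + (r - 1)^2 * ((n - 2) choose (r - 2)))
      = real ((n - 1) choose (r - 1)) + (R - 1)^2 * real ((n - 2) choose (r - 2))"
    unfolding R_def using r_ge by (simp add: of_nat_diff)
  ultimately have "real (((n - 1) choose (r - 1)) + (r - 1)^2 * ((n - 2) choose (r - 2)))
        \<le> S * e + (R - 1)^2 * (C * e)"
    using T1 by linarith
  also have "\<dots> = S * e * (1 + (R - 1)^3 / D)"
    unfolding C_eq by (simp add: algebra_simps power3_eq_cube power2_eq_square)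
  also have "\<dots> \<le> S * e * (1 + a * (1 + g))"
    using gam S_nonneg e_pos by (intro mult_left_mono) auto
  also have "\<dots> \<le> S * e * ((1 + g) * (1 + a))"
    using S_nonneg e_pos a_nonneg g_nonneg by (intro mult_left_mono) (auto simp: algebra_simps)
  also have "\<dots> = S * (e * (1 + g) * (1 + a))"
    by (simp add: mult_ac)
  finally show ?thesis unfolding S_def e_def g_def a_def R_def N_def .
qed

lemma non_singleton_bound_le:
  "real ((r choose 2) * ((n - 2) choose (r - 2)))
   \<le> exp (8 * real r^2 / real n) * (2 * real r^2 / real n) * real (r * ((n - r) choose (r - 1)))"
proof -
  define R N where "R = real r" and "N = real n"
  define e P Q D where "e = exp (8 * R^2 / N)" and "P = real ((n - r) choose (r - 1))"
    and "Q = real ((n - r) choose (r - 2))" and "D = N - 2 * R + 2"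
  have R2: "2 \<le> R" and NR: "4 * R \<le> N" unfolding R_def N_def using r_ge n_ge by auto
  have D_pos: "0 < D" unfolding D_def using NR R2 by linarith
  have e_pos: "0 < e" and P_nonneg: "0 \<le> P" unfolding e_def P_def by auto
  have "real (r choose 2) \<le> R^2"
    using binomial_le_pow[of 2 r] r_ge unfolding R_def by (metis of_nat_le_iff of_nat_power)
  moreover have "real ((n - r + (r - 2)) choose (r - 2)) \<le> Q * e"
    unfolding Q_def e_def R_def N_def using r_ge n_ge by (intro binomial_add_le_exp_sq) auto
  moreover have "n - r + (r - 2) = n - 2" using r_ge n_ge by simp
  ultimately have "real (r choose 2) * real ((n - 2) choose (r - 2)) \<le> R^2 * (Q * e)"
    by (intro mult_mono) (auto simp: Q_def)
  then have "real ((r choose 2) * ((n - 2) choose (r - 2))) \<le> R^2 * (Q * e)"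
    by simp
  also have "Q = P * (R - 1) / D"
    using meet_count_absorb D_pos unfolding P_def Q_def D_def R_def N_def by (simp add: eq_divide_eq)
  also have "R^2 * (P * (R - 1) / D * e) \<le> R^2 * (P * (2 * R / N) * e)"
  proof -
    have "(R - 1) / D \<le> 2 * R / N"
      using pred_div_gap_le[OF R2 NR] unfolding D_def .
    then have "R^2 * (P * ((R - 1) / D) * e) \<le> R^2 * (P * (2 * R / N) * e)"
      using P_nonneg e_pos by (intro mult_left_mono mult_right_mono) auto
    then show ?thesis by simp
  qed
  also have "\<dots> = e * (2 * R^2 / N) * (R * P)"
    by (simp add: power2_eq_square)
  finally show ?thesis unfolding e_def P_def R_def N_def by simp
qed

lemma PrA3_mul_ge: "star_lower_bound (real n) (real r) \<le> PrA3 n r * (1 + (real r - 1)^3 / real n)"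
proof -
  define S T K B where "S = real ((n - 2 * r + 1) choose (r - 1))"
    and "T = real (((n - 1) choose (r - 1)) + (r - 1)^2 * ((n - 2) choose (r - 2)))"
    and "K = real (r * ((n - r) choose (r - 1)))"
    and "B = real ((r choose 2) * ((n - 2) choose (r - 2)))"
  define e g a X where "e = exp (8 * real r^2 / real n)" and "g = 12 * real r / real n"
    and "a = (real r - 1)^3 / real n" and "X = e * (2 * real r^2 / real n)"
  define Y where "Y = e * (1 + g) * (1 + a)"
  have pos: "0 < S" "0 < K" "0 < e" "0 \<le> g" "0 \<le> a" "0 \<le> X" "0 \<le> B"
    unfolding S_def K_def e_def g_def a_def X_def B_def
    using star_count_pos r_ge n_ge by auto
  have Y_pos: "0 < Y" unfolding Y_def using pos by (simp add: add_pos_nonneg)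
  have T_le: "T \<le> S * Y"
    using adm_pair_bound_le unfolding S_def T_def Y_def e_def g_def a_def .
  have B_le: "B \<le> X * K"
    using non_singleton_bound_le unfolding B_def X_def K_def e_def .
  have "0 < (n - 1) choose (r - 1)" using r_ge n_ge by simp
  then have T_pos: "0 < T" unfolding T_def of_nat_0_less_iff by linarith
  have "1 / Y = S / (S * Y)" using pos(1) by simp
  also have "\<dots> \<le> S / T"
    using T_le T_pos Y_pos pos by (intro divide_left_mono mult_pos_pos) auto
  finally have ST: "1 / Y \<le> S / T" .
  have "K + X * K = K * (1 + X)" by (simp add: algebra_simps)
  then have "1 / (1 + X) = K / (K + X * K)" using pos(2) by simp
  also have "\<dots> \<le> K / (K + B)"
    using B_le pos by (intro divide_left_mono mult_pos_pos) auto
  finally have KB: "1 / (1 + X) \<le> K / (K + B)" .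
  have "1 / Y * (1 / (1 + X)) \<le> S / T * (K / (K + B))"
    using ST KB pos T_pos by (intro mult_mono) auto
  also have "\<dots> \<le> PrA3 n r"
    using PrA3_ge[OF r_ge n_ge] unfolding S_def T_def K_def B_def .
  finally have "1 / Y * (1 / (1 + X)) * (1 + a) \<le> PrA3 n r * (1 + a)"
    using pos by (intro mult_right_mono) auto
  moreover have "1 / Y * (1 / (1 + X)) * (1 + a) = star_lower_bound (real n) (real r)"
  proof -
    have "1 + a \<noteq> 0" using pos by simp
    have "1 / Y * (1 / (1 + X)) * (1 + a) = (1 + a) / ((1 + a) * (e * (1 + g) * (1 + X)))"
      unfolding Y_def by (simp add: mult_ac)
    also have "\<dots> = 1 / (e * (1 + g) * (1 + X))"
      using \<open>1 + a \<noteq> 0\<close> by (rule nonzero_divide_mult_cancel_left)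
    also have "\<dots> = star_lower_bound (real n) (real r)"
      unfolding star_lower_bound_def e_def g_def X_def ..
    finally show ?thesis .
  qed
  ultimately have "star_lower_bound (real n) (real r) \<le> PrA3 n r * (1 + a)"
    by linarith
  then show ?thesis unfolding a_def .
qed
end

section \<open>Asymptotics\<close>

lemma star_lower_bound_tendsto_one:
  assumes "((\<lambda>x. R x ^ 2 / N x) \<longlongrightarrow> 0) F" "((\<lambda>x. R x / N x) \<longlongrightarrow> 0) F"
  shows "((\<lambda>x. star_lower_bound (N x) (R x)) \<longlongrightarrow> 1) F"
proof -
  have "((\<lambda>x. 1 / (exp (8 * (R x ^ 2 / N x)) * (1 + 12 * (R x / N x)) *
      (1 + exp (8 * (R x ^ 2 / N x)) * (2 * (R x ^ 2 / N x))))) \<longlongrightarrow>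
      1 / (exp (8 * 0) * (1 + 12 * 0) * (1 + exp (8 * 0) * (2 * 0)))) F"
    by (intro tendsto_intros assms) auto
  then show ?thesis by (simp add: star_lower_bound_def)
qed

lemma PrA3_mul_tendsto_one:
  fixes r :: "nat \<Rightarrow> nat"
  assumes r_ge: "\<And>n. 2 \<le> r n" and r_sq: "(\<lambda>n. real (r n) ^ 2 / real n) \<longlonglongrightarrow> 0"
  shows "(\<lambda>n. PrA3 n (r n) * (1 + (real (r n) - 1)^3 / real n)) \<longlonglongrightarrow> 1"
proof -
  have "1 \<le> real (r n)" for n using r_ge[of n] by simp
  then have r_lin: "(\<lambda>n. real (r n) / real n) \<longlonglongrightarrow> 0"
    by (rule div_tendsto_zero_of_sq_div[OF r_sq])
  have "\<forall>\<^sub>F n in sequentially. real (r n) / real n < 1 / 4"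
    using r_lin by (rule order_tendstoD) simp
  then have large: "\<forall>\<^sub>F n in sequentially. 4 * r n \<le> n"
    using eventually_gt_at_top[of 0]
    by eventually_elim (simp add: divide_less_eq)
  show ?thesis
  proof (rule tendsto_sandwich[OF _ _ star_lower_bound_tendsto_one[OF r_sq r_lin] tendsto_const])
    show "\<forall>\<^sub>F n in sequentially. star_lower_bound (real n) (real (r n))
            \<le> PrA3 n (r n) * (1 + (real (r n) - 1)^3 / real n)"
      using large by eventually_elim (rule PrA3_mul_ge[OF r_ge])
    show "\<forall>\<^sub>F n in sequentially. PrA3 n (r n) * (1 + (real (r n) - 1)^3 / real n) \<le> 1"
      using large by eventually_elim (rule PrA3_mul_le_one[OF r_ge])
  qed
qed

theorem lemma2:
  fixes r :: "nat \<Rightarrow> nat"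
  assumes r2: "\<And>n. r n \<ge> 2"
    and rsmall: "(\<lambda>n. real (r n)) \<in> o(\<lambda>n. sqrt (real n))"
  shows "(\<exists>\<epsilon>1 \<epsilon>2 :: nat \<Rightarrow> real. \<epsilon>1 \<longlonglongrightarrow> 0 \<and> \<epsilon>2 \<longlonglongrightarrow> 0 \<and>
            (\<forall>\<^sub>F n in sequentially.
               PrA3 n (r n) = (1 - \<epsilon>1 n) /
                 (1 + (real (r n) - 1) ^ 3 / real n * (1 + \<epsilon>2 n))))
       \<and> (\<forall>c::real. c \<ge> 0 \<longrightarrow> (\<lambda>n. real (r n) / real n powr (1/3)) \<longlonglongrightarrow> c \<longrightarrow>
            (\<lambda>n. PrA3 n (r n)) \<longlonglongrightarrow> 1 / (1 + c ^ 3))"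
proof -
  define A where "A n = (real (r n) - 1) ^ 3 / real n" for n
  define Q where "Q n = PrA3 n (r n) * (1 + A n)" for n
  have r_sq: "(\<lambda>n. real (r n) ^ 2 / real n) \<longlonglongrightarrow> 0"
    by (rule sq_div_tendsto_zero_of_smallo_sqrt[OF rsmall])
  have Q_lim: "Q \<longlonglongrightarrow> 1"
    unfolding Q_def A_def by (rule PrA3_mul_tendsto_one[OF r2 r_sq])
  have A_pos: "0 < 1 + A n" for n
    unfolding A_def using r2[of n] by (auto intro: add_pos_nonneg)
  have PrA3_eq: "PrA3 n (r n) = Q n / (1 + A n)" for n
    using A_pos[of n] unfolding Q_def by simp
  have "(\<lambda>n. 1 - Q n) \<longlonglongrightarrow> 0"
    using tendsto_diff[OF tendsto_const Q_lim, of 1] by simp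
  \<comment> \<open>all of the error can be put into \<open>\<epsilon>1\<close>, taking \<open>\<epsilon>2 = 0\<close>\<close>
  then have "\<exists>\<epsilon>1 \<epsilon>2 :: nat \<Rightarrow> real. \<epsilon>1 \<longlonglongrightarrow> 0 \<and> \<epsilon>2 \<longlonglongrightarrow> 0 \<and>
      (\<forall>\<^sub>F n in sequentially. PrA3 n (r n) = (1 - \<epsilon>1 n) / (1 + A n * (1 + \<epsilon>2 n)))"
    using PrA3_eq by (intro exI[of _ "\<lambda>n. 1 - Q n"] exI[of _ "\<lambda>_. 0"]) auto
  moreover have "(\<lambda>n. PrA3 n (r n)) \<longlonglongrightarrow> 1 / (1 + c ^ 3)"
    if "c \<ge> 0" "(\<lambda>n. real (r n) / real n powr (1/3)) \<longlonglongrightarrow> c" for c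
  proof -
    have "1 \<le> real (r n)" for n using r2[of n] by simp
    then have "A \<longlonglongrightarrow> c ^ 3"
      unfolding A_def by (rule pred_cube_div_tendsto[OF that(2) r_sq])
    then show ?thesis
      unfolding PrA3_eq using that(1) Q_lim by (intro tendsto_intros) (auto simp: add_nonneg_eq_0_iff)
  qed
  ultimately show ?thesis unfolding A_def by blast
qed

end
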